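(* Let $G$ be a finite simple graph without isolated vertices, and consider a position of the Disjoint Domination Game (or its biased $(d:s)$ variant) on $G$ in which no vertex has a monochromatic closed neighborhood. Let $C$ be a connected component of $G$, and suppose there are an uncolored vertex $u\in V(C)$ and a color $c\in\{p,b\}$ such that coloring $u$ with $c$ is a legal move and, after it, every vertex of $C$ is dominated by both $V_p$ and $V_b$. Then no sequence of legal moves from the current position results in a vertex $v\in V(C)$ with $N[v]\subseteq V_p$ or $N[v]\subseteq V_b$.
   Context: $N[v]$ denotes the closed neighborhood of $v$. In the Disjoint Domination Game, vertices are colored one at a time with colors $p$ or $b$ (either player may use either color); $V_p,V_b$ are the current sets of vertices of each color; coloring a vertex $v$ with color $c$ is legal iff $v$ is uncolored and some $w\in N[v]$ satisfies $N[w]\cap V_c=\emptyset$ (before the coloring). A vertex $x$ is dominated by a set $S$ if $N[x]\cap S\neq\emptyset$. *)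

theory Defs
  imports Main
begin

definition simple_graph :: "'a set \<Rightarrow> ('a \<Rightarrow> 'a \<Rightarrow> bool) \<Rightarrow> bool" where
  "simple_graph V E \<longleftrightarrow> finite V \<and>
     (\<forall>x y. E x y \<longrightarrow> x \<in> V \<and> y \<in> V \<and> x \<noteq> y \<and> E y x)"

definition cnbh :: "'a set \<Rightarrow> ('a \<Rightarrow> 'a \<Rightarrow> bool) \<Rightarrow> 'a \<Rightarrow> 'a set" where
  "cnbh V E v = {w \<in> V. w = v \<or> E v w}"

definition is_component :: "'a set \<Rightarrow> ('a \<Rightarrow> 'a \<Rightarrow> bool) \<Rightarrow> 'a set \<Rightarrow> bool" where
  "is_component V E C \<longleftrightarrow> (\<exists>x \<in> V. C = {y. E\<^sup>*\<^sup>* x y})"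

datatype color = P | B

fun colset :: "color \<Rightarrow> 'a set \<times> 'a set \<Rightarrow> 'a set" where
  "colset P s = fst s"
| "colset B s = snd s"

fun move :: "'a set \<times> 'a set \<Rightarrow> 'a \<Rightarrow> color \<Rightarrow> 'a set \<times> 'a set" where
  "move (Vp, Vb) v P = (insert v Vp, Vb)"
| "move (Vp, Vb) v B = (Vp, insert v Vb)"

definition legal :: "'a set \<Rightarrow> ('a \<Rightarrow> 'a \<Rightarrow> bool) \<Rightarrow> 'a set \<times> 'a set \<Rightarrow> 'a \<Rightarrow> color \<Rightarrow> bool" where
  "legal V E s v c \<longleftrightarrow> v \<in> V \<and> v \<notin> fst s \<and> v \<notin> snd s \<and>
     (\<exists>w \<in> cnbh V E v. cnbh V E w \<inter> colset c s = {})"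

inductive reach :: "'a set \<Rightarrow> ('a \<Rightarrow> 'a \<Rightarrow> bool) \<Rightarrow> 'a set \<times> 'a set \<Rightarrow> 'a set \<times> 'a set \<Rightarrow> bool"
  for V E where
  refl: "reach V E s s"
| step: "reach V E s t \<Longrightarrow> legal V E t v c \<Longrightarrow> reach V E s (move t v c)"

definition dominated :: "'a set \<Rightarrow> ('a \<Rightarrow> 'a \<Rightarrow> bool) \<Rightarrow> 'a set \<Rightarrow> 'a \<Rightarrow> bool" where
  "dominated V E S x \<longleftrightarrow> cnbh V E x \<inter> S \<noteq> {}"

end

theory Submission
  imports Defs
begin

text \<open>Fix a vertex v of C and a colour d, and let e be the other colour. After the
hypothetical move some y \<in> N[v] has colour e. If y already had colour e, it keeps it, so
y never gets colour d. Otherwise y = u was to be coloured e, so that move does not change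
V_d; hence every vertex of N[u] \<subseteq> C is already dominated by V_d, which makes colouring u
with d illegal for the rest of the game. Either way N[v] \<subseteq> V_d never happens.\<close>

lemma colset_move:
  "colset d (move s v e) = (if d = e then insert v (colset d s) else colset d s)"
  by (cases s; cases d; cases e) auto

lemma legal_uncolored: "legal V E s v e \<Longrightarrow> v \<notin> colset d s"
  unfolding legal_def by (cases d) auto

lemma reach_colset_mono: "reach V E s t \<Longrightarrow> colset d s \<subseteq> colset d t"
  by (induction rule: reach.induct) (auto simp: colset_move)

lemma reach_colsets_disjoint:
  assumes "reach V E s t" and "colset P s \<inter> colset B s = {}"
  shows "colset P t \<inter> colset B t = {}"
  using assms
proof (induction rule: reach.induct)
  case refl
  then show ?case .
next
  case (step s t v e)
  have "v \<notin> colset P t" "v \<notin> colset B t"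
    using step.hyps(2) by (rule legal_uncolored)+
  then show ?case
    using step.IH step.prems by (cases e) (auto simp: colset_move)
qed

lemma reach_keeps_uncolored:
  assumes "reach V E s t"
    and "\<forall>w \<in> cnbh V E u. dominated V E (colset d s) w"
    and "u \<notin> colset d s"
  shows "u \<notin> colset d t"
  using assms
proof (induction rule: reach.induct)
  case refl
  then show ?case by simp
next
  case (step s t v e)
  have "\<not> (e = d \<and> v = u)"
  proof
    assume "e = d \<and> v = u"
    then obtain w where "w \<in> cnbh V E u" "cnbh V E w \<inter> colset d t = {}"
      using step.hyps(2) unfolding legal_def by auto
    moreover have "colset d s \<subseteq> colset d t"
      using step.hyps(1) by (rule reach_colset_mono)
    ultimately show False
      using step.prems(1) unfolding dominated_def by blast
  qed
  then show ?case
    using step by (auto simp: colset_move)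
qed

lemma component_cnbh_subset:
  assumes "is_component V E C" and "u \<in> C"
  shows "cnbh V E u \<subseteq> C"
  using assms unfolding is_component_def cnbh_def
  by (auto intro: rtranclp.rtrancl_into_rtrancl)

lemma cnbh_never_monochromatic:
  assumes reach: "reach V E s t"
    and disjoint: "colset P s \<inter> colset B s = {}"
    and legal: "legal V E s u c"
    and closed: "cnbh V E u \<subseteq> C"
    and dom: "\<forall>x \<in> C. \<forall>e. dominated V E (colset e (move s u c)) x"
    and "v \<in> C"
  shows "\<not> cnbh V E v \<subseteq> colset d t"
proof
  assume covered: "cnbh V E v \<subseteq> colset d t"
  obtain e where "e \<noteq> d"
    by (metis (full_types) color.distinct(1))
  obtain y where y: "y \<in> cnbh V E v" "y \<in> colset e (move s u c)"
    using dom \<open>v \<in> C\<close> unfolding dominated_def by blast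
  show False
  proof (cases "y \<in> colset e s")
    case True
    then have "y \<in> colset e t"
      using reach_colset_mono[OF reach] by blast
    moreover have "colset P t \<inter> colset B t = {}"
      using reach disjoint by (rule reach_colsets_disjoint)
    ultimately show False
      using covered y(1) \<open>e \<noteq> d\<close> by (cases d; cases e) auto
  next
    case False
    then have "y = u" "d \<noteq> c"
      using y(2) \<open>e \<noteq> d\<close> by (auto simp: colset_move split: if_splits)
    then have "colset d (move s u c) = colset d s"
      by (simp add: colset_move)
    then have "\<forall>x \<in> C. dominated V E (colset d s) x"
      using dom by metis
    then have "\<forall>w \<in> cnbh V E u. dominated V E (colset d s) w"
      using closed by blast
    then have "u \<notin> colset d t"
      by (rule reach_keeps_uncolored[OF reach _ legal_uncolored[OF legal]])
    then show False
      using covered y(1) \<open>y = u\<close> by blast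
  qed
qed

theorem lemma9:
  fixes V :: "'a set" and E :: "'a \<Rightarrow> 'a \<Rightarrow> bool"
    and Vp Vb C :: "'a set" and u :: 'a and c :: color
  assumes "simple_graph V E"
    and "\<forall>v \<in> V. \<exists>w. E v w"
    and "reach V E ({}, {}) (Vp, Vb)"
    and "\<forall>v \<in> V. \<not> cnbh V E v \<subseteq> Vp \<and> \<not> cnbh V E v \<subseteq> Vb"
    and "is_component V E C"
    and "u \<in> C"
    and "legal V E (Vp, Vb) u c"
    and "\<forall>x \<in> C. dominated V E (fst (move (Vp, Vb) u c)) x
                 \<and> dominated V E (snd (move (Vp, Vb) u c)) x"
  shows "\<forall>s. reach V E (Vp, Vb) s \<longrightarrow>
           (\<forall>v \<in> C. \<not> cnbh V E v \<subseteq> fst s \<and> \<not> cnbh V E v \<subseteq> snd s)"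
proof (intro allI impI ballI)
  fix s v
  assume "reach V E (Vp, Vb) s" and "v \<in> C"
  have disjoint: "colset P (Vp, Vb) \<inter> colset B (Vp, Vb) = {}"
    using reach_colsets_disjoint[OF assms(3)] by simp
  have dom: "\<forall>x \<in> C. \<forall>e. dominated V E (colset e (move (Vp, Vb) u c)) x"
    using assms(8) by (metis (full_types) colset.simps color.exhaust)
  have closed: "cnbh V E u \<subseteq> C"
    using assms(5,6) by (rule component_cnbh_subset)
  have "\<not> cnbh V E v \<subseteq> colset d s" for d
    using cnbh_never_monochromatic[OF \<open>reach V E (Vp, Vb) s\<close> disjoint assms(7) closed dom \<open>v \<in> C\<close>] .
  from this[of P] this[of B] show "\<not> cnbh V E v \<subseteq> fst s \<and> \<not> cnbh V E v \<subseteq> snd s"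
    by simp
qed

end
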